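(* Let $\Phi$ be a finite crystallographic root system and let $\Psi\subset\Phi^+$ be an antichain in the root poset. Then (i) $\langle\beta,\gamma\rangle\le 0$ for all $\beta\ne\gamma$ in $\Psi$; (ii) there are at most $|\Psi|-1$ (unordered) pairs $\{\beta,\gamma\}$ of distinct roots in $\Psi$ for which $\mathcal{X}_\beta$ and $\mathcal{X}_\gamma$ are dependent; (iii) the graph on the vertex set $\Psi$ with an edge between $\beta\ne\gamma$ whenever $\mathcal{X}_\beta$ and $\mathcal{X}_\gamma$ are dependent has maximal vertex degree at most $3$.
   Context: $\Phi\subset V$ is a finite crystallographic root system (inner product $\langle\cdot,\cdot\rangle$) with simple roots $\Delta$, positive roots $\Phi^+$ and Weyl group $W$. The root poset is the partial order on $\Phi^+$ generated by $\beta\prec\gamma$ whenever $\gamma-\beta\in\Delta$; an antichain is a set of pairwise incomparable elements. For $\beta\in\Phi^+$, $\mathcal{X}_\beta$ is the Bernoulli random variable on $W$ (uniform) with $\mathcal{X}_\beta(w)=1$ if $w(\beta)\in-\Phi^+$ and $0$ otherwise. *)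

theory Defs
  imports "HOL-Analysis.Analysis" "HOL-Probability.Probability"
begin

definition refl :: "'a::euclidean_space \<Rightarrow> 'a \<Rightarrow> 'a" where
  "refl \<alpha> v = v - (2 * (v \<bullet> \<alpha>) / (\<alpha> \<bullet> \<alpha>)) *\<^sub>R \<alpha>"

definition root_system :: "'a::euclidean_space set \<Rightarrow> bool" where
  "root_system \<Phi> \<longleftrightarrow> finite \<Phi> \<and> 0 \<notin> \<Phi> \<and> span \<Phi> = UNIV
     \<and> (\<forall>\<alpha>\<in>\<Phi>. refl \<alpha> ` \<Phi> = \<Phi>)
     \<and> (\<forall>\<alpha>\<in>\<Phi>. \<forall>c::real. c *\<^sub>R \<alpha> \<in> \<Phi> \<longrightarrow> c = 1 \<or> c = -1)
     \<and> (\<forall>\<alpha>\<in>\<Phi>. \<forall>\<beta>\<in>\<Phi>. 2 * (\<beta> \<bullet> \<alpha>) / (\<alpha> \<bullet> \<alpha>) \<in> \<int>)"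

definition nonneg_comb :: "'a::euclidean_space set \<Rightarrow> 'a \<Rightarrow> bool" where
  "nonneg_comb \<Delta> v \<longleftrightarrow> (\<exists>c. (\<forall>\<delta>\<in>\<Delta>. c \<delta> \<ge> (0::real)) \<and> v = (\<Sum>\<delta>\<in>\<Delta>. c \<delta> *\<^sub>R \<delta>))"

definition simple_system :: "'a::euclidean_space set \<Rightarrow> 'a set \<Rightarrow> bool" where
  "simple_system \<Phi> \<Delta> \<longleftrightarrow> \<Delta> \<subseteq> \<Phi> \<and> independent \<Delta>
     \<and> (\<forall>\<alpha>\<in>\<Phi>. nonneg_comb \<Delta> \<alpha> \<or> nonneg_comb \<Delta> (- \<alpha>))"

definition pos_roots :: "'a::euclidean_space set \<Rightarrow> 'a set \<Rightarrow> 'a set" where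
  "pos_roots \<Phi> \<Delta> = {\<alpha>\<in>\<Phi>. nonneg_comb \<Delta> \<alpha>}"

inductive_set weyl_group :: "'a::euclidean_space set \<Rightarrow> ('a \<Rightarrow> 'a) set" for \<Phi> where
  weyl_id: "id \<in> weyl_group \<Phi>"
| weyl_step: "w \<in> weyl_group \<Phi> \<Longrightarrow> \<alpha> \<in> \<Phi> \<Longrightarrow> refl \<alpha> \<circ> w \<in> weyl_group \<Phi>"

definition root_le :: "'a::euclidean_space set \<Rightarrow> 'a set \<Rightarrow> 'a \<Rightarrow> 'a \<Rightarrow> bool" where
  "root_le \<Phi> \<Delta> \<beta> \<gamma> \<longleftrightarrow>
     (\<beta>, \<gamma>) \<in> {(x, y). x \<in> pos_roots \<Phi> \<Delta> \<and> y \<in> pos_roots \<Phi> \<Delta> \<and> y - x \<in> \<Delta>}\<^sup>*"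

definition antichain :: "'a::euclidean_space set \<Rightarrow> 'a set \<Rightarrow> 'a set \<Rightarrow> bool" where
  "antichain \<Phi> \<Delta> \<Psi> \<longleftrightarrow> \<Psi> \<subseteq> pos_roots \<Phi> \<Delta>
     \<and> (\<forall>\<beta>\<in>\<Psi>. \<forall>\<gamma>\<in>\<Psi>. \<beta> \<noteq> \<gamma> \<longrightarrow> \<not> root_le \<Phi> \<Delta> \<beta> \<gamma>)"

definition Xvar :: "'a::euclidean_space set \<Rightarrow> 'a set \<Rightarrow> 'a \<Rightarrow> ('a \<Rightarrow> 'a) \<Rightarrow> real" where
  "Xvar \<Phi> \<Delta> \<beta> w = (if w \<beta> \<in> uminus ` pos_roots \<Phi> \<Delta> then 1 else 0)"

definition dependent_pair :: "'a::euclidean_space set \<Rightarrow> 'a set \<Rightarrow> 'a \<Rightarrow> 'a \<Rightarrow> bool" where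
  "dependent_pair \<Phi> \<Delta> \<beta> \<gamma> \<longleftrightarrow>
     \<not> prob_space.indep_var (measure_pmf (pmf_of_set (weyl_group \<Phi>)))
         borel (Xvar \<Phi> \<Delta> \<beta>) borel (Xvar \<Phi> \<Delta> \<gamma>)"

end

theory Submission
  imports Defs
begin

(*
  (i) If two roots of an antichain had positive inner product, their difference would be a root,
  hence positive or negative, and the two roots would be comparable in the root poset.

  (ii), (iii) For orthogonal beta and gamma, composing with s_beta on the right toggles X_beta and
  fixes X_gamma, while composing with s_gamma toggles X_gamma; so (X_beta, X_gamma) is uniformly
  distributed on {0,1}^2 and the two variables are independent. Dependent pairs are therefore
  non-orthogonal, and it suffices to bound the graph of non-orthogonal pairs. Distinct roots of an
  antichain are pairwise non-acute by (i); two non-orthogonal ones meet at an angle of at least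
  2 pi / 3, because their Cartan integers are negative and have product at least 1; and all of them
  have positive height, so no positive combination of them vanishes. Writing u' = u / |u|, the
  inequality 0 < |sum of the u'|^2 <= |Psi| - #edges gives (ii), and
  0 < |2 beta' + sum of the gamma' over the neighbours gamma of beta|^2 <= 4 - deg beta gives (iii).
*)

section \<open>Independence from toggling symmetries\<close>

lemma sum_toggled_bits_product:
  fixes X Y :: "'w \<Rightarrow> real" and F G :: "real \<Rightarrow> real"
  assumes f: "bij_betw f W W" and g: "bij_betw g W W"
    and X01: "\<And>w. w \<in> W \<Longrightarrow> X w \<in> {0, 1}" and Y01: "\<And>w. w \<in> W \<Longrightarrow> Y w \<in> {0, 1}"
    and Xf: "\<And>w. w \<in> W \<Longrightarrow> X (f w) = 1 - X w" and Yf: "\<And>w. w \<in> W \<Longrightarrow> Y (f w) = Y w"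
    and Yg: "\<And>w. w \<in> W \<Longrightarrow> Y (g w) = 1 - Y w"
  shows "(\<Sum>w\<in>W. F (X w) * G (Y w)) = (F 0 + F 1) * (G 0 + G 1) * card W / 4"
proof -
  have sX: "(\<Sum>w\<in>W. X w) = card W / 2"
    using sum.reindex_bij_betw[OF f, of X] sum.cong[OF refl Xf, of W] by (simp add: sum_subtractf)
  have sY: "(\<Sum>w\<in>W. Y w) = card W / 2"
    using sum.reindex_bij_betw[OF g, of Y] sum.cong[OF refl Yg, of W] by (simp add: sum_subtractf)
  have "(\<Sum>w\<in>W. X (f w) * Y (f w)) = (\<Sum>w\<in>W. Y w - X w * Y w)"
    by (intro sum.cong) (simp_all add: Xf Yf algebra_simps)
  then have sXY: "(\<Sum>w\<in>W. X w * Y w) = card W / 4"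
    using sum.reindex_bij_betw[OF f, of "\<lambda>w. X w * Y w"] by (simp add: sum_subtractf sY)
  have "F (X w) * G (Y w) = F 0 * G 0 + F 0 * (G 1 - G 0) * Y w + (F 1 - F 0) * G 0 * X w
      + (F 1 - F 0) * (G 1 - G 0) * (X w * Y w)" if "w \<in> W" for w
    using X01[OF that] Y01[OF that] by (auto simp: algebra_simps)
  then have "(\<Sum>w\<in>W. F (X w) * G (Y w)) = F 0 * G 0 * card W + F 0 * (G 1 - G 0) * (card W / 2)
      + (F 1 - F 0) * G 0 * (card W / 2) + (F 1 - F 0) * (G 1 - G 0) * (card W / 4)"
    by (simp add: sum.distrib sum_distrib_left[symmetric] sX sY sXY)
  then show ?thesis by (simp add: algebra_simps)
qed

lemma (in prob_space) indep_varI: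
  assumes rv: "random_variable S X" "random_variable T Y"
    and prod: "\<And>A B. A \<in> sets S \<Longrightarrow> B \<in> sets T \<Longrightarrow>
      prob (X -` A \<inter> space M \<inter> (Y -` B \<inter> space M)) = prob (X -` A \<inter> space M) * prob (Y -` B \<inter> space M)"
  shows "indep_var S X T Y"
proof -
  have "indep_set {X -` A \<inter> space M |A. A \<in> sets S} {Y -` B \<inter> space M |B. B \<in> sets T}"
    unfolding indep_sets2_eq using rv prod by (auto dest: measurable_sets)
  then show ?thesis
    unfolding indep_var_def indep_vars_def2 indep_set_def using rv
    by (subst (asm) indep_sets_cong[where G="\<lambda>i. {case_bool X Y i -` A \<inter> space M |A. A \<in> sets (case_bool S T i)}"])
      (auto split: bool.split)
qed

lemma card_preimages_toggled_bits:
  fixes X Y :: "'w \<Rightarrow> real"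
  assumes "finite W" and "bij_betw f W W" "bij_betw g W W"
    and "\<And>w. w \<in> W \<Longrightarrow> X w \<in> {0, 1}" "\<And>w. w \<in> W \<Longrightarrow> Y w \<in> {0, 1}"
    and "\<And>w. w \<in> W \<Longrightarrow> X (f w) = 1 - X w" "\<And>w. w \<in> W \<Longrightarrow> Y (f w) = Y w"
    and "\<And>w. w \<in> W \<Longrightarrow> Y (g w) = 1 - Y w"
  shows "real (card (W \<inter> (X -` A \<inter> Y -` B))) * card W = real (card (W \<inter> X -` A)) * card (W \<inter> Y -` B)"
proof -
  note sum_product = sum_toggled_bits_product[of f W g X Y, OF assms(2-)]
  have card_eq_sum: "real (card (W \<inter> E)) = (\<Sum>w\<in>W. indicator E w)" for E
    using assms(1) by (simp add: indicator_def sum.If_cases Int_def)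
  define a b :: real where "a = indicator A 0 + indicator A 1" and "b = indicator B 0 + indicator B 1"
  have "real (card (W \<inter> (X -` A \<inter> Y -` B))) = (\<Sum>w\<in>W. indicator A (X w) * indicator B (Y w))"
    unfolding card_eq_sum by (intro sum.cong) (auto simp: indicator_def)
  also have "\<dots> = a * b * card W / 4"
    unfolding a_def b_def by (rule sum_product)
  finally have joint: "real (card (W \<inter> (X -` A \<inter> Y -` B))) = a * b * card W / 4" .
  have "real (card (W \<inter> X -` A)) = (\<Sum>w\<in>W. indicator A (X w) * (\<lambda>_. 1) (Y w))"
    unfolding card_eq_sum by (intro sum.cong) (auto simp: indicator_def)
  also have "\<dots> = a * card W / 2"
    using sum_product[of "indicator A" "\<lambda>_. 1"] by (simp add: a_def algebra_simps)
  finally have marginal_X: "real (card (W \<inter> X -` A)) = a * card W / 2" .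
  have "real (card (W \<inter> Y -` B)) = (\<Sum>w\<in>W. (\<lambda>_. 1) (X w) * indicator B (Y w))"
    unfolding card_eq_sum by (intro sum.cong) (auto simp: indicator_def)
  also have "\<dots> = b * card W / 2"
    using sum_product[of "\<lambda>_. 1" "indicator B"] by (simp add: b_def algebra_simps)
  finally have marginal_Y: "real (card (W \<inter> Y -` B)) = b * card W / 2" .
  show ?thesis
    by (simp add: joint marginal_X marginal_Y)
qed

lemma indep_var_pmf_of_set_toggled_bits:
  fixes X Y :: "'w \<Rightarrow> real"
  assumes "finite W" "W \<noteq> {}" and "bij_betw f W W" "bij_betw g W W"
    and "\<And>w. w \<in> W \<Longrightarrow> X w \<in> {0, 1}" "\<And>w. w \<in> W \<Longrightarrow> Y w \<in> {0, 1}"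
    and "\<And>w. w \<in> W \<Longrightarrow> X (f w) = 1 - X w" "\<And>w. w \<in> W \<Longrightarrow> Y (f w) = Y w"
    and "\<And>w. w \<in> W \<Longrightarrow> Y (g w) = 1 - Y w"
  shows "prob_space.indep_var (measure_pmf (pmf_of_set W)) borel X borel Y"
proof -
  let ?prob = "measure_pmf.prob (pmf_of_set W)"
  have "?prob (X -` A \<inter> Y -` B) = ?prob (X -` A) * ?prob (Y -` B)" for A B
    using card_preimages_toggled_bits[of W f g X Y A B, OF assms(1) assms(3-)] assms(1,2)
    by (simp add: measure_pmf_of_set card_gt_0_iff field_simps)
  then show ?thesis
    by (intro measure_pmf.indep_varI) auto
qed

section \<open>Obtuse families of vectors\<close>

lemma sum_card_neighbours_eq_twice_card_edges:
  assumes "finite S" and sym: "\<And>a b. r a b \<Longrightarrow> r b a" and irrefl: "\<And>a. \<not> r a a"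
  shows "(\<Sum>a\<in>S. card {b\<in>S. r a b}) = 2 * card {{a, b} | a b. a \<in> S \<and> b \<in> S \<and> r a b}"
    (is "_ = 2 * card ?E")
proof -
  have "finite ?E"
    by (rule finite_subset[of _ "Pow S"]) (use \<open>finite S\<close> in auto)
  have "card {b\<in>S. r a b} = card {e\<in>?E. a \<in> e}" if "a \<in> S" for a
  proof (rule bij_betw_same_card[of "\<lambda>b. {a, b}"])
    show "bij_betw (\<lambda>b. {a, b}) {b\<in>S. r a b} {e\<in>?E. a \<in> e}"
      unfolding bij_betw_def inj_on_def using that
      by (auto simp: doubleton_eq_iff irrefl image_iff dest: sym)
  qed
  moreover have "card {a\<in>S. a \<in> e} = 2" if "e \<in> ?E" for e
  proof -
    obtain a b where "e = {a, b}" "a \<in> S" "b \<in> S" "a \<noteq> b"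
      using \<open>e \<in> ?E\<close> irrefl by blast
    then have "{x\<in>S. x \<in> e} = {a, b}" by auto
    with \<open>a \<noteq> b\<close> show ?thesis by simp
  qed
  ultimately show ?thesis
    using sum_multicount[OF \<open>finite S\<close> \<open>finite ?E\<close>, of "(\<in>)" 2] by simp
qed

lemma inner_sgn_sgn: "sgn a \<bullet> sgn b = (a \<bullet> b) / (norm a * norm b)"
  by (simp add: sgn_div_norm divide_inverse mult_ac)

locale obtuse_family =
  fixes S :: "'a::real_inner set" and h :: "'a \<Rightarrow> real"
  assumes finite_S: "finite S" and linear_h: "linear h" and h_pos: "a \<in> S \<Longrightarrow> 0 < h a"
    and inner_nonpos: "a \<in> S \<Longrightarrow> b \<in> S \<Longrightarrow> a \<noteq> b \<Longrightarrow> a \<bullet> b \<le> 0"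
    and sgn_inner_le: "a \<in> S \<Longrightarrow> b \<in> S \<Longrightarrow> a \<bullet> b < 0 \<Longrightarrow> sgn a \<bullet> sgn b \<le> - 1 / 2"
begin

lemma nonzero: "a \<in> S \<Longrightarrow> a \<noteq> 0"
  using h_pos linear_0[OF linear_h] by force

lemma sgn_inner_sgn_self: "a \<in> S \<Longrightarrow> sgn a \<bullet> sgn a = 1"
  using nonzero by (simp flip: power2_norm_eq_inner add: norm_sgn)

lemma sgn_inner_sgn_nonpos: "a \<in> S \<Longrightarrow> b \<in> S \<Longrightarrow> a \<noteq> b \<Longrightarrow> sgn a \<bullet> sgn b \<le> 0"
  using inner_nonpos by (simp add: inner_sgn_sgn divide_nonpos_nonneg)

lemma sgn_inner_sgn_nonorthogonal:
  "a \<in> S \<Longrightarrow> b \<in> S \<Longrightarrow> a \<noteq> b \<Longrightarrow> a \<bullet> b \<noteq> 0 \<Longrightarrow> sgn a \<bullet> sgn b \<le> - 1 / 2"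
  using inner_nonpos sgn_inner_le by force

lemma positive_combination_nonzero:
  assumes "T \<subseteq> S" "T \<noteq> {}" "\<And>a. a \<in> T \<Longrightarrow> 0 < c a"
  shows "(\<Sum>a\<in>T. c a *\<^sub>R a) \<noteq> 0"
proof -
  have "finite T" using assms(1) finite_S finite_subset by blast
  have "h (\<Sum>a\<in>T. c a *\<^sub>R a) = (\<Sum>a\<in>T. c a * h a)"
    using linear_h by (simp add: linear_sum linear_scale)
  also have "\<dots> > 0"
    using assms h_pos \<open>finite T\<close> by (intro sum_pos) auto
  finally show ?thesis using linear_0[OF linear_h] by force
qed

lemma sum_sgn_nonzero: "T \<subseteq> S \<Longrightarrow> T \<noteq> {} \<Longrightarrow> (\<Sum>a\<in>T. sgn a) \<noteq> 0"
  using positive_combination_nonzero[of T "\<lambda>a. inverse (norm a)"] nonzero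
  by (auto simp: sgn_div_norm divide_inverse_commute)

lemma sum_sgn_inner_sgn_le:
  assumes "T \<subseteq> S" "a \<in> T"
  shows "(\<Sum>b\<in>T. sgn a \<bullet> sgn b) \<le> 1 - card {b\<in>T. a \<noteq> b \<and> a \<bullet> b \<noteq> 0} / 2"
proof -
  let ?N = "{b\<in>T. a \<noteq> b \<and> a \<bullet> b \<noteq> 0}"
  have "finite T" using assms(1) finite_S finite_subset by blast
  have "(\<Sum>b\<in>T. sgn a \<bullet> sgn b) = 1 + (\<Sum>b\<in>T - {a}. sgn a \<bullet> sgn b)"
    using assms \<open>finite T\<close> by (simp add: sum.remove sgn_inner_sgn_self subsetD)
  also have "(\<Sum>b\<in>T - {a}. sgn a \<bullet> sgn b) \<le> (\<Sum>b\<in>T - {a}. if b \<in> ?N then - 1 / 2 else 0)"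
  proof (intro sum_mono)
    fix b assume "b \<in> T - {a}"
    then show "sgn a \<bullet> sgn b \<le> (if b \<in> ?N then - 1 / 2 else 0)"
      using assms sgn_inner_sgn_nonorthogonal[of a b] sgn_inner_sgn_nonpos[of a b] by auto
  qed
  also have "\<dots> = (\<Sum>b\<in>?N. - 1 / 2)"
    using \<open>finite T\<close> by (intro sum.mono_neutral_cong_right) auto
  finally show ?thesis by simp
qed

lemma inner_sum_sgn_le:
  assumes "T \<subseteq> S"
  shows "(\<Sum>a\<in>T. sgn a) \<bullet> (\<Sum>a\<in>T. sgn a)
    \<le> card T - card {{a, b} | a b. a \<in> T \<and> b \<in> T \<and> a \<noteq> b \<and> a \<bullet> b \<noteq> 0}"
proof -
  have "finite T" using assms finite_S finite_subset by blast
  have "(\<Sum>a\<in>T. sgn a) \<bullet> (\<Sum>a\<in>T. sgn a) = (\<Sum>a\<in>T. \<Sum>b\<in>T. sgn a \<bullet> sgn b)"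
    unfolding inner_sum_left inner_sum_right by (rule sum.swap)
  also have "\<dots> \<le> (\<Sum>a\<in>T. 1 - card {b\<in>T. a \<noteq> b \<and> a \<bullet> b \<noteq> 0} / 2)"
    using assms by (intro sum_mono sum_sgn_inner_sgn_le)
  also have "\<dots> = card T - (\<Sum>a\<in>T. card {b\<in>T. a \<noteq> b \<and> a \<bullet> b \<noteq> 0}) / 2"
    by (simp add: sum_subtractf sum_divide_distrib)
  also have "(\<Sum>a\<in>T. card {b\<in>T. a \<noteq> b \<and> a \<bullet> b \<noteq> 0})
      = 2 * card {{a, b} | a b. a \<in> T \<and> b \<in> T \<and> a \<noteq> b \<and> a \<bullet> b \<noteq> 0}"
    using \<open>finite T\<close> by (rule sum_card_neighbours_eq_twice_card_edges) (auto simp: inner_commute)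
  finally show ?thesis by simp
qed

lemma card_nonorthogonal_pairs_le:
  "card {{a, b} | a b. a \<in> S \<and> b \<in> S \<and> a \<noteq> b \<and> a \<bullet> b \<noteq> 0} \<le> card S - 1"
proof (cases "S = {}")
  case False
  then have "0 < (\<Sum>a\<in>S. sgn a) \<bullet> (\<Sum>a\<in>S. sgn a)"
    using sum_sgn_nonzero[OF order_refl] by simp
  with inner_sum_sgn_le[OF order_refl] show ?thesis by linarith
qed simp

lemma card_nonorthogonal_neighbours_le_3:
  assumes "a \<in> S"
  shows "card {b\<in>S. b \<noteq> a \<and> a \<bullet> b \<noteq> 0} \<le> 3"
proof -
  define N where "N = {b\<in>S. b \<noteq> a \<and> a \<bullet> b \<noteq> 0}"
  define y where "y = (\<Sum>b\<in>N. sgn b)"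
  have "finite N" "N \<subseteq> S" "a \<notin> N" using finite_S by (auto simp: N_def)
  define c where "c b = (if b = a then 2 else 1) / norm b" for b
  have "(\<Sum>b\<in>N. c b *\<^sub>R b) = y"
    unfolding y_def using \<open>a \<notin> N\<close> by (intro sum.cong) (auto simp: c_def sgn_div_norm divide_inverse_commute)
  then have "2 *\<^sub>R sgn a + y = (\<Sum>b\<in>insert a N. c b *\<^sub>R b)"
    using \<open>finite N\<close> \<open>a \<notin> N\<close> by (simp add: c_def sgn_div_norm divide_inverse_commute)
  also have "\<dots> \<noteq> 0"
    using assms \<open>N \<subseteq> S\<close> nonzero by (intro positive_combination_nonzero) (auto simp: c_def)
  finally have "0 < (2 *\<^sub>R sgn a + y) \<bullet> (2 *\<^sub>R sgn a + y)" by simp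
  also have "\<dots> = 4 * (sgn a \<bullet> sgn a) + 4 * (sgn a \<bullet> y) + y \<bullet> y"
    by (simp add: inner_add_left inner_add_right inner_commute)
  also have "sgn a \<bullet> sgn a = 1" using assms by (rule sgn_inner_sgn_self)
  also have "sgn a \<bullet> y \<le> - card N / 2"
  proof -
    have "sgn a \<bullet> y = (\<Sum>b\<in>N. sgn a \<bullet> sgn b)" by (simp add: y_def inner_sum_right)
    also have "\<dots> \<le> (\<Sum>b\<in>N. - 1 / 2)"
      using assms by (intro sum_mono sgn_inner_sgn_nonorthogonal) (auto simp: N_def)
    finally show ?thesis by simp
  qed
  also have "y \<bullet> y \<le> card N"
    using inner_sum_sgn_le[OF \<open>N \<subseteq> S\<close>] by (simp add: y_def)
  finally show ?thesis by (simp add: N_def)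
qed

lemma card_edges_le_if_nonorthogonal:
  assumes "\<And>a b. a \<in> S \<Longrightarrow> b \<in> S \<Longrightarrow> r a b \<Longrightarrow> a \<bullet> b \<noteq> 0"
  shows "card {{a, b} | a b. a \<in> S \<and> b \<in> S \<and> a \<noteq> b \<and> r a b} \<le> card S - 1"
proof -
  have "finite {{a, b} | a b. a \<in> S \<and> b \<in> S \<and> a \<noteq> b \<and> a \<bullet> b \<noteq> 0}"
    by (rule finite_subset[of _ "Pow S"]) (use finite_S in auto)
  then have "card {{a, b} | a b. a \<in> S \<and> b \<in> S \<and> a \<noteq> b \<and> r a b}
      \<le> card {{a, b} | a b. a \<in> S \<and> b \<in> S \<and> a \<noteq> b \<and> a \<bullet> b \<noteq> 0}"
    by (rule card_mono) (use assms in blast)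
  also have "\<dots> \<le> card S - 1" by (rule card_nonorthogonal_pairs_le)
  finally show ?thesis .
qed

lemma card_neighbours_le_3_if_nonorthogonal:
  assumes "\<And>a b. a \<in> S \<Longrightarrow> b \<in> S \<Longrightarrow> r a b \<Longrightarrow> a \<bullet> b \<noteq> 0" and "a \<in> S"
  shows "card {b\<in>S. b \<noteq> a \<and> r a b} \<le> 3"
proof -
  have "card {b\<in>S. b \<noteq> a \<and> r a b} \<le> card {b\<in>S. b \<noteq> a \<and> a \<bullet> b \<noteq> 0}"
    by (rule card_mono) (use finite_S assms in auto)
  also have "\<dots> \<le> 3" using assms(2) by (rule card_nonorthogonal_neighbours_le_3)
  finally show ?thesis .
qed

end

section \<open>Roots and their coordinates\<close>

lemma pos_int_mult_less_4:
  fixes k l :: int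
  assumes "0 < k" "0 < l" "k * l < 4"
  shows "k = 1 \<or> l = 1"
proof (rule ccontr)
  assume "\<not> (k = 1 \<or> l = 1)"
  with assms(1,2) have "2 * 2 \<le> k * l" by (intro mult_mono) auto
  with assms(3) show False by simp
qed

lemma refl_self: "refl \<alpha> \<alpha> = - \<alpha>"
  by (cases "\<alpha> = 0") (simp_all add: refl_def scaleR_2 algebra_simps)

lemma refl_refl: "refl \<alpha> (refl \<alpha> v) = v"
  by (cases "\<alpha> = 0") (simp_all add: refl_def algebra_simps)

lemma refl_comp_refl: "refl \<alpha> \<circ> refl \<alpha> = id"
  by (simp add: fun_eq_iff refl_refl)

lemma refl_orthogonal: "v \<bullet> \<alpha> = 0 \<Longrightarrow> refl \<alpha> v = v"
  by (simp add: refl_def)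

lemma linear_refl: "linear (refl \<alpha>)"
  by (rule linearI) (simp_all add: refl_def algebra_simps add_divide_distrib)

locale based_root_system =
  fixes \<Phi> \<Delta> :: "'a::euclidean_space set"
  assumes root_system: "root_system \<Phi>" and simple_system: "simple_system \<Phi> \<Delta>"
begin

abbreviation P :: "'a set" where "P \<equiv> pos_roots \<Phi> \<Delta>"

lemma finite_roots: "finite \<Phi>"
  and zero_notin_roots: "0 \<notin> \<Phi>"
  and span_roots: "span \<Phi> = UNIV"
  and refl_image_roots: "\<alpha> \<in> \<Phi> \<Longrightarrow> refl \<alpha> ` \<Phi> = \<Phi>"
  and roots_reduced: "\<alpha> \<in> \<Phi> \<Longrightarrow> c *\<^sub>R \<alpha> \<in> \<Phi> \<Longrightarrow> c = 1 \<or> c = -1"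
  and cartan_integer: "\<alpha> \<in> \<Phi> \<Longrightarrow> \<beta> \<in> \<Phi> \<Longrightarrow> 2 * (\<beta> \<bullet> \<alpha>) / (\<alpha> \<bullet> \<alpha>) \<in> \<int>"
  using root_system unfolding root_system_def by auto

lemma simple_subset_roots: "\<Delta> \<subseteq> \<Phi>"
  and independent_simple: "independent \<Delta>"
  and roots_nonneg_comb: "\<alpha> \<in> \<Phi> \<Longrightarrow> nonneg_comb \<Delta> \<alpha> \<or> nonneg_comb \<Delta> (- \<alpha>)"
  using simple_system unfolding simple_system_def by auto

lemma finite_simple: "finite \<Delta>"
  using simple_subset_roots finite_roots finite_subset by blast

lemma root_nonzero: "\<alpha> \<in> \<Phi> \<Longrightarrow> \<alpha> \<noteq> 0"
  using zero_notin_roots by blast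

lemma refl_root: "\<alpha> \<in> \<Phi> \<Longrightarrow> \<beta> \<in> \<Phi> \<Longrightarrow> refl \<alpha> \<beta> \<in> \<Phi>"
  using refl_image_roots by blast

lemma uminus_root: "\<alpha> \<in> \<Phi> \<Longrightarrow> - \<alpha> \<in> \<Phi>"
  using refl_root[of \<alpha> \<alpha>] by (simp add: refl_self)

lemma span_simple: "span \<Delta> = UNIV"
proof -
  have "nonneg_comb \<Delta> v \<Longrightarrow> v \<in> span \<Delta>" for v
    unfolding nonneg_comb_def by (auto intro!: span_sum span_scale intro: span_base)
  then have "\<Phi> \<subseteq> span \<Delta>"
    using roots_nonneg_comb span_neg by fastforce
  then show ?thesis
    using span_roots span_minimal[of \<Phi> "span \<Delta>"] by auto
qed

definition coord :: "'a \<Rightarrow> 'a \<Rightarrow> real" where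
  "coord d v = representation \<Delta> v d"

lemma linear_coord: "linear (coord d)"
  by (rule linearI)
    (simp_all add: coord_def representation_add representation_scale independent_simple span_simple)

lemma coord_add: "coord d (u + v) = coord d u + coord d v"
  and coord_diff: "coord d (u - v) = coord d u - coord d v"
  using linear_coord by (simp_all add: linear_add linear_diff)

lemma coord_simple: "e \<in> \<Delta> \<Longrightarrow> coord d e = (if e = d then 1 else 0)"
  by (simp add: coord_def representation_basis independent_simple)

lemma sum_coord_scaleR: "(\<Sum>d\<in>\<Delta>. coord d v *\<^sub>R d) = v"
  unfolding coord_def
  by (rule sum_representation_eq) (simp_all add: independent_simple span_simple finite_simple)

lemma eq_if_coord_eq:
  assumes "\<And>d. d \<in> \<Delta> \<Longrightarrow> coord d u = coord d v"
  shows "u = v"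
proof -
  have "(\<Sum>d\<in>\<Delta>. coord d u *\<^sub>R d) = (\<Sum>d\<in>\<Delta>. coord d v *\<^sub>R d)"
    using assms by (intro sum.cong) auto
  then show ?thesis by (simp only: sum_coord_scaleR)
qed

lemma coord_sum_scaleR:
  assumes "d \<in> \<Delta>"
  shows "coord d (\<Sum>e\<in>\<Delta>. c e *\<^sub>R e) = c d"
proof -
  have "coord d (\<Sum>e\<in>\<Delta>. c e *\<^sub>R e) = (\<Sum>e\<in>\<Delta>. c e * coord d e)"
    using linear_coord[of d] by (simp add: linear_sum linear_scale)
  also have "\<dots> = (\<Sum>e\<in>\<Delta>. if e = d then c e else 0)"
    by (intro sum.cong) (simp_all add: coord_simple)
  finally show ?thesis
    using assms finite_simple by simp
qed

lemma nonneg_comb_iff: "nonneg_comb \<Delta> v \<longleftrightarrow> (\<forall>d\<in>\<Delta>. 0 \<le> coord d v)"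
proof
  assume "nonneg_comb \<Delta> v"
  then obtain c where "\<forall>d\<in>\<Delta>. 0 \<le> c d" "v = (\<Sum>d\<in>\<Delta>. c d *\<^sub>R d)"
    unfolding nonneg_comb_def by blast
  then show "\<forall>d\<in>\<Delta>. 0 \<le> coord d v" by (simp add: coord_sum_scaleR)
next
  assume "\<forall>d\<in>\<Delta>. 0 \<le> coord d v"
  then show "nonneg_comb \<Delta> v"
    unfolding nonneg_comb_def by (intro exI[of _ "\<lambda>d. coord d v"]) (simp add: sum_coord_scaleR)
qed

lemma pos_roots_iff: "\<alpha> \<in> P \<longleftrightarrow> \<alpha> \<in> \<Phi> \<and> (\<forall>d\<in>\<Delta>. 0 \<le> coord d \<alpha>)"
  by (simp add: pos_roots_def nonneg_comb_iff)

lemma pos_roots_subset: "P \<subseteq> \<Phi>"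
  by (simp add: pos_roots_def)

lemma root_pos_or_neg: "\<alpha> \<in> \<Phi> \<Longrightarrow> \<alpha> \<in> P \<or> - \<alpha> \<in> P"
  using roots_nonneg_comb uminus_root by (auto simp: pos_roots_def)

definition ht :: "'a \<Rightarrow> real" where
  "ht v = (\<Sum>d\<in>\<Delta>. coord d v)"

lemma linear_ht: "linear ht"
  unfolding ht_def[abs_def] by (rule linear_compose_sum) (simp add: linear_coord)

lemma ht_diff: "ht (u - v) = ht u - ht v"
  using linear_ht by (rule linear_diff)

lemma ht_nonneg: "\<forall>d\<in>\<Delta>. 0 \<le> coord d v \<Longrightarrow> 0 \<le> ht v"
  unfolding ht_def by (rule sum_nonneg) blast

lemma ht_simple: "d \<in> \<Delta> \<Longrightarrow> ht d = 1"
  using finite_simple by (simp add: ht_def coord_simple)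

lemma ht_pos:
  assumes "v \<noteq> 0" and nonneg: "\<forall>d\<in>\<Delta>. 0 \<le> coord d v"
  shows "0 < ht v"
proof -
  have "\<exists>d\<in>\<Delta>. coord d v \<noteq> 0"
    using assms(1) eq_if_coord_eq[of v 0] linear_0[OF linear_coord] by auto
  then show ?thesis
    unfolding ht_def using nonneg finite_simple
    by (simp add: order_less_le sum_nonneg sum_nonneg_eq_0_iff)
qed

lemma pos_root_ht_pos: "\<alpha> \<in> P \<Longrightarrow> 0 < ht \<alpha>"
  using ht_pos pos_roots_iff root_nonzero by blast

lemma uminus_pos_root_notin: "\<alpha> \<in> P \<Longrightarrow> - \<alpha> \<notin> P"
  using pos_root_ht_pos[of \<alpha>] pos_root_ht_pos[of "- \<alpha>"] linear_neg[OF linear_ht] by fastforce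

lemma simple_subset_pos_roots: "\<Delta> \<subseteq> P"
  using simple_subset_roots by (auto simp: pos_roots_iff coord_simple)

lemma roots_not_parallel:
  assumes "\<alpha> \<in> \<Phi>" "\<beta> \<in> \<Phi>" "\<beta> \<noteq> \<alpha>" "\<beta> \<noteq> - \<alpha>"
  shows "(\<alpha> \<bullet> \<beta>)\<^sup>2 < (\<alpha> \<bullet> \<alpha>) * (\<beta> \<bullet> \<beta>)"
proof (rule ccontr)
  assume "\<not> ?thesis"
  then have "(\<alpha> \<bullet> \<beta>)\<^sup>2 = (\<alpha> \<bullet> \<alpha>) * (\<beta> \<bullet> \<beta>)"
    using Cauchy_Schwarz_ineq[of \<alpha> \<beta>] by linarith
  then have "\<bar>\<alpha> \<bullet> \<beta>\<bar> = norm \<alpha> * norm \<beta>"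
    by (metis norm_eq_sqrt_inner real_sqrt_abs real_sqrt_mult)
  then have parallel: "norm \<alpha> *\<^sub>R \<beta> = norm \<beta> *\<^sub>R \<alpha> \<or> norm \<alpha> *\<^sub>R \<beta> = - norm \<beta> *\<^sub>R \<alpha>"
    using norm_cauchy_schwarz_abs_eq by blast
  define c where "c = norm \<beta> / norm \<alpha>"
  have "norm \<alpha> \<noteq> 0" using root_nonzero assms(1) by simp
  then have "\<beta> = (1 / norm \<alpha>) *\<^sub>R (norm \<alpha> *\<^sub>R \<beta>)" by simp
  with parallel have "\<beta> = (1 / norm \<alpha>) *\<^sub>R (norm \<beta> *\<^sub>R \<alpha>) \<or> \<beta> = (1 / norm \<alpha>) *\<^sub>R (- norm \<beta> *\<^sub>R \<alpha>)"
    by metis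
  then have "\<beta> = c *\<^sub>R \<alpha> \<or> \<beta> = (- c) *\<^sub>R \<alpha>"
    by (simp add: c_def)
  then have "\<beta> = \<alpha> \<or> \<beta> = - \<alpha>"
    using roots_reduced[OF assms(1), of c] roots_reduced[OF assms(1), of "- c"] assms(2) by auto
  with assms(3,4) show False by blast
qed

lemma cartan_integers:
  assumes "\<alpha> \<in> \<Phi>" "\<beta> \<in> \<Phi>"
  obtains k l :: int
  where "2 * (\<alpha> \<bullet> \<beta>) / (\<beta> \<bullet> \<beta>) = k" "2 * (\<alpha> \<bullet> \<beta>) / (\<alpha> \<bullet> \<alpha>) = l"
    and "4 * (\<alpha> \<bullet> \<beta>)\<^sup>2 = of_int k * of_int l * ((\<alpha> \<bullet> \<alpha>) * (\<beta> \<bullet> \<beta>))"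
proof -
  obtain k where k: "2 * (\<alpha> \<bullet> \<beta>) / (\<beta> \<bullet> \<beta>) = of_int k"
    using cartan_integer[OF assms(2,1)] by (auto elim!: Ints_cases)
  obtain l where l: "2 * (\<alpha> \<bullet> \<beta>) / (\<alpha> \<bullet> \<alpha>) = of_int l"
    using cartan_integer[OF assms] by (auto simp: inner_commute elim!: Ints_cases)
  have "\<alpha> \<bullet> \<alpha> \<noteq> 0" "\<beta> \<bullet> \<beta> \<noteq> 0"
    using root_nonzero assms by auto
  then have "4 * (\<alpha> \<bullet> \<beta>)\<^sup>2
      = (2 * (\<alpha> \<bullet> \<beta>) / (\<beta> \<bullet> \<beta>)) * (2 * (\<alpha> \<bullet> \<beta>) / (\<alpha> \<bullet> \<alpha>)) * ((\<alpha> \<bullet> \<alpha>) * (\<beta> \<bullet> \<beta>))"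
    by (simp add: field_simps power2_eq_square)
  then have "4 * (\<alpha> \<bullet> \<beta>)\<^sup>2 = of_int k * of_int l * ((\<alpha> \<bullet> \<alpha>) * (\<beta> \<bullet> \<beta>))"
    by (simp only: k l)
  with k l that show ?thesis by blast
qed

lemma diff_root_if_inner_pos:
  assumes "\<alpha> \<in> \<Phi>" "\<beta> \<in> \<Phi>" "0 < \<alpha> \<bullet> \<beta>" "\<alpha> \<noteq> \<beta>"
  shows "\<alpha> - \<beta> \<in> \<Phi>"
proof -
  obtain k l :: int where k: "2 * (\<alpha> \<bullet> \<beta>) / (\<beta> \<bullet> \<beta>) = k" and l: "2 * (\<alpha> \<bullet> \<beta>) / (\<alpha> \<bullet> \<alpha>) = l"
    and kl: "4 * (\<alpha> \<bullet> \<beta>)\<^sup>2 = of_int k * of_int l * ((\<alpha> \<bullet> \<alpha>) * (\<beta> \<bullet> \<beta>))"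
    using cartan_integers[OF assms(1,2)] .
  have pos: "0 < \<alpha> \<bullet> \<alpha>" "0 < \<beta> \<bullet> \<beta>"
    using root_nonzero assms(1,2) by auto
  have "\<beta> \<noteq> - \<alpha>"
  proof
    assume "\<beta> = - \<alpha>"
    with assms(3) have "\<alpha> \<bullet> \<alpha> < 0" by simp
    with inner_ge_zero[of \<alpha>] show False by linarith
  qed
  then have "(\<alpha> \<bullet> \<beta>)\<^sup>2 < (\<alpha> \<bullet> \<alpha>) * (\<beta> \<bullet> \<beta>)"
    using roots_not_parallel assms by auto
  then have "of_int k * of_int l * ((\<alpha> \<bullet> \<alpha>) * (\<beta> \<bullet> \<beta>)) < 4 * ((\<alpha> \<bullet> \<alpha>) * (\<beta> \<bullet> \<beta>))"
    using kl by linarith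
  then have "of_int (k * l) < (4::real)"
    using pos by (simp add: mult_less_cancel_right)
  then have "k * l < 4" by (simp only: of_int_less_numeral_iff)
  moreover have "of_int k > (0::real)" "of_int l > (0::real)"
    unfolding k[symmetric] l[symmetric] using pos assms(3) by simp_all
  ultimately have "k = 1 \<or> l = 1"
    by (intro pos_int_mult_less_4) simp_all
  then show ?thesis
  proof
    assume "k = 1"
    then have "refl \<beta> \<alpha> = \<alpha> - \<beta>" unfolding refl_def k by simp
    then show ?thesis using refl_root assms(1,2) by metis
  next
    assume "l = 1"
    then have "refl \<alpha> \<beta> = - (\<alpha> - \<beta>)" unfolding refl_def inner_commute[of \<beta> \<alpha>] l by simp
    then show ?thesis using refl_root uminus_root assms(1,2) by (metis minus_minus)
  qed
qed

lemma sgn_inner_sgn_le_if_obtuse: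
  assumes "\<alpha> \<in> \<Phi>" "\<beta> \<in> \<Phi>" "\<alpha> \<bullet> \<beta> < 0"
  shows "sgn \<alpha> \<bullet> sgn \<beta> \<le> - 1 / 2"
proof -
  obtain k l :: int where k: "2 * (\<alpha> \<bullet> \<beta>) / (\<beta> \<bullet> \<beta>) = k" and l: "2 * (\<alpha> \<bullet> \<beta>) / (\<alpha> \<bullet> \<alpha>) = l"
    and kl: "4 * (\<alpha> \<bullet> \<beta>)\<^sup>2 = of_int k * of_int l * ((\<alpha> \<bullet> \<alpha>) * (\<beta> \<bullet> \<beta>))"
    using cartan_integers[OF assms(1,2)] .
  have pos: "0 < \<alpha> \<bullet> \<alpha>" "0 < \<beta> \<bullet> \<beta>"
    using root_nonzero assms(1,2) by auto
  have "of_int k < (0::real)" "of_int l < (0::real)"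
    unfolding k[symmetric] l[symmetric] using pos assms(3) by (simp_all add: divide_less_0_iff)
  then have "k < 0" "l < 0" by simp_all
  then have "1 \<le> k * l" by (simp add: mult_neg_neg int_one_le_iff_zero_less)
  then have "(norm \<alpha> * norm \<beta>)\<^sup>2 \<le> (- 2 * (\<alpha> \<bullet> \<beta>))\<^sup>2"
    using kl pos by (simp add: power_mult_distrib power2_norm_eq_inner flip: of_int_mult)
  then have "norm \<alpha> * norm \<beta> \<le> - 2 * (\<alpha> \<bullet> \<beta>)"
    by (rule power2_le_imp_le) (use assms(3) in simp_all)
  then show ?thesis
    using root_nonzero assms by (simp add: inner_sgn_sgn field_simps)
qed

section \<open>The root poset\<close>

lemma exists_simple_coord_inner_pos:
  assumes "v \<noteq> 0"
  obtains d where "d \<in> \<Delta>" "0 < coord d v * (d \<bullet> v)"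
proof -
  have "0 < v \<bullet> v" using assms by simp
  also have "v \<bullet> v = (\<Sum>d\<in>\<Delta>. coord d v * (d \<bullet> v))"
    by (subst (1) sum_coord_scaleR[of v, symmetric]) (simp add: inner_sum_left)
  finally have pos: "0 < (\<Sum>d\<in>\<Delta>. coord d v * (d \<bullet> v))" .
  show ?thesis
  proof (rule ccontr)
    assume "\<not> thesis"
    then have "(\<Sum>d\<in>\<Delta>. coord d v * (d \<bullet> v)) \<le> 0"
      using that by (intro sum_nonpos) (meson not_le)
    with pos show False by simp
  qed
qed

lemma pos_root_diff_simple:
  assumes "\<beta> \<in> P" "\<beta> \<notin> \<Delta>"
  obtains d where "d \<in> \<Delta>" "\<beta> - d \<in> P"
proof -
  have \<beta>: "\<beta> \<in> \<Phi>" "\<forall>e\<in>\<Delta>. 0 \<le> coord e \<beta>"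
    using assms(1) pos_roots_iff by auto
  obtain d where d: "d \<in> \<Delta>" "0 < coord d \<beta> * (d \<bullet> \<beta>)"
    using exists_simple_coord_inner_pos root_nonzero \<beta>(1) by metis
  then have "0 < coord d \<beta>" "0 < \<beta> \<bullet> d"
    using \<beta>(2) by (auto simp: zero_less_mult_iff inner_commute)
  have "\<beta> - d \<in> \<Phi>"
    using diff_root_if_inner_pos \<beta>(1) d(1) simple_subset_roots \<open>0 < \<beta> \<bullet> d\<close> assms(2) by blast
  moreover have "d - \<beta> \<notin> P"
  proof
    assume "d - \<beta> \<in> P"
    then have "\<forall>e\<in>\<Delta>. coord e \<beta> \<le> coord e d"
      by (auto simp: pos_roots_iff coord_diff)
    then have "\<beta> = coord d \<beta> *\<^sub>R d"
      using \<beta>(2) d(1) linear_coord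
      by (intro eq_if_coord_eq) (force simp: linear_scale coord_simple)
    then have "coord d \<beta> = 1"
      using roots_reduced[of d "coord d \<beta>"] \<beta>(1) d(1) simple_subset_roots \<open>0 < coord d \<beta>\<close> by auto
    with \<open>\<beta> = coord d \<beta> *\<^sub>R d\<close> d(1) assms(2) show False by simp
  qed
  ultimately have "\<beta> - d \<in> P"
    using root_pos_or_neg by fastforce
  with d(1) that show ?thesis by blast
qed

lemma coord_pos_root_Ints:
  assumes "\<beta> \<in> P" "d \<in> \<Delta>"
  shows "coord d \<beta> \<in> \<int>"
proof -
  have Ints: "coord d \<beta> \<in> \<int>" if "\<beta> \<in> P" "ht \<beta> < of_nat n" for \<beta> n
    using that
  proof (induction n arbitrary: \<beta>)
    case 0
    then show ?case using pos_root_ht_pos by fastforce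
  next
    case (Suc n)
    show ?case
    proof (cases "\<beta> \<in> \<Delta>")
      case True
      then show ?thesis by (simp add: coord_simple)
    next
      case False
      then obtain e where "e \<in> \<Delta>" "\<beta> - e \<in> P"
        using pos_root_diff_simple Suc.prems(1) by metis
      moreover have "ht (\<beta> - e) < of_nat n"
        using Suc.prems(2) \<open>e \<in> \<Delta>\<close> by (simp add: ht_diff ht_simple)
      ultimately have "coord d (\<beta> - e) \<in> \<int>"
        using Suc.IH by blast
      then show ?thesis
        using \<open>e \<in> \<Delta>\<close> by (simp add: coord_diff coord_simple split: if_splits)
    qed
  qed
  obtain n :: nat where "ht \<beta> < of_nat n"
    using reals_Archimedean2 by blast
  then show ?thesis by (rule Ints[OF assms(1)])
qed

abbreviation covers :: "('a \<times> 'a) set" where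
  "covers \<equiv> {(x, y). x \<in> P \<and> y \<in> P \<and> y - x \<in> \<Delta>}"

lemma pos_root_minus_simple:
  assumes "\<beta> \<in> P" "\<gamma> \<in> P" "d \<in> \<Delta>" "0 < \<beta> \<bullet> d" and nonneg: "\<forall>e\<in>\<Delta>. 0 \<le> coord e (\<beta> - d - \<gamma>)"
  shows "\<beta> - d \<in> P"
proof -
  have coords: "\<forall>e\<in>\<Delta>. 0 \<le> coord e (\<beta> - d)"
  proof
    fix e assume "e \<in> \<Delta>"
    then have "0 \<le> coord e \<gamma>" "0 \<le> coord e (\<beta> - d - \<gamma>)"
      using assms(2) nonneg by (auto simp: pos_roots_iff)
    then show "0 \<le> coord e (\<beta> - d)" by (simp add: coord_diff)
  qed
  have "0 < ht \<gamma> + ht (\<beta> - d - \<gamma>)"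
    using pos_root_ht_pos[OF assms(2)] ht_nonneg[OF nonneg] by linarith
  then have "\<beta> \<noteq> d"
    using linear_0[OF linear_ht] by (auto simp: ht_diff)
  then have "\<beta> - d \<in> \<Phi>"
    using diff_root_if_inner_pos assms(1,3,4) pos_roots_subset simple_subset_roots by blast
  with coords show ?thesis by (simp add: pos_roots_iff)
qed

lemma pos_root_plus_simple:
  assumes "\<gamma> \<in> P" "d \<in> \<Delta>" "\<gamma> \<bullet> d < 0"
  shows "\<gamma> + d \<in> P"
proof -
  have "\<gamma> \<noteq> - d"
    using assms(1,2) simple_subset_pos_roots uminus_pos_root_notin by blast
  moreover have "\<gamma> \<in> \<Phi>" "- d \<in> \<Phi>"
    using assms(1,2) pos_roots_subset simple_subset_roots uminus_root by auto
  ultimately have "\<gamma> - (- d) \<in> \<Phi>"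
    using assms(3) by (intro diff_root_if_inner_pos) auto
  moreover have "\<forall>e\<in>\<Delta>. 0 \<le> coord e (\<gamma> + d)"
    using assms(1,2) by (simp add: pos_roots_iff coord_add coord_simple)
  ultimately show ?thesis by (simp add: pos_roots_iff)
qed

lemma exists_simple_step:
  assumes "\<beta> \<in> P" "\<gamma> \<in> P" "\<beta> \<noteq> \<gamma>" and nonneg: "\<forall>d\<in>\<Delta>. 0 \<le> coord d (\<beta> - \<gamma>)"
  obtains d where "d \<in> \<Delta>" "\<forall>e\<in>\<Delta>. 0 \<le> coord e (\<beta> - \<gamma> - d)" "\<beta> - d \<in> P \<or> \<gamma> + d \<in> P"
proof -
  have "\<beta> - \<gamma> \<noteq> 0" using assms(3) by simp
  then obtain d where d: "d \<in> \<Delta>" "0 < coord d (\<beta> - \<gamma>) * (d \<bullet> (\<beta> - \<gamma>))"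
    by (rule exists_simple_coord_inner_pos)
  then have "0 < coord d (\<beta> - \<gamma>)" "\<gamma> \<bullet> d < \<beta> \<bullet> d"
    using nonneg by (auto simp: zero_less_mult_iff inner_diff_right inner_commute)
  moreover have "coord d (\<beta> - \<gamma>) \<in> \<int>"
    using coord_pos_root_Ints assms(1,2) d(1) by (simp add: coord_diff)
  ultimately have "1 \<le> coord d (\<beta> - \<gamma>)"
    using Ints_nonzero_abs_ge1[of "coord d (\<beta> - \<gamma>)"] by simp
  then have nonneg_d: "\<forall>e\<in>\<Delta>. 0 \<le> coord e (\<beta> - \<gamma> - d)"
    using nonneg d(1) by (simp add: coord_diff coord_simple)
  have "\<beta> - d \<in> P \<or> \<gamma> + d \<in> P"
  proof (cases "0 < \<beta> \<bullet> d")
    case True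
    have swap: "\<beta> - d - \<gamma> = \<beta> - \<gamma> - d" by (simp add: algebra_simps)
    show ?thesis
      using pos_root_minus_simple[OF assms(1,2) d(1) True, unfolded swap] nonneg_d by blast
  next
    case False
    with \<open>\<gamma> \<bullet> d < \<beta> \<bullet> d\<close> have "\<gamma> \<bullet> d < 0" by linarith
    then show ?thesis
      using pos_root_plus_simple assms(2) d(1) by blast
  qed
  with d(1) nonneg_d that show ?thesis by blast
qed

lemma root_le_if_coord_diff_nonneg:
  assumes "\<beta> \<in> P" "\<gamma> \<in> P" "\<forall>d\<in>\<Delta>. 0 \<le> coord d (\<beta> - \<gamma>)"
  shows "root_le \<Phi> \<Delta> \<gamma> \<beta>"
proof -
  have chain: "(\<gamma>, \<beta>) \<in> covers\<^sup>*"
    if "\<beta> \<in> P" "\<gamma> \<in> P" "\<forall>d\<in>\<Delta>. 0 \<le> coord d (\<beta> - \<gamma>)" "ht (\<beta> - \<gamma>) < of_nat n" for \<beta> \<gamma> n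
    using that
  proof (induction n arbitrary: \<beta> \<gamma>)
    case 0
    then show ?case using ht_nonneg[of "\<beta> - \<gamma>"] by simp
  next
    case (Suc n)
    show ?case
    proof (cases "\<beta> = \<gamma>")
      case False
      then obtain d where d: "d \<in> \<Delta>" and nonneg: "\<forall>e\<in>\<Delta>. 0 \<le> coord e (\<beta> - \<gamma> - d)"
        and step: "\<beta> - d \<in> P \<or> \<gamma> + d \<in> P"
        using exists_simple_step Suc.prems(1-3) by metis
      have ht_less: "ht (\<beta> - \<gamma> - d) < of_nat n"
        using Suc.prems(4) d by (simp add: ht_diff ht_simple)
      have swap: "\<beta> - d - \<gamma> = \<beta> - \<gamma> - d" and shift: "\<beta> - (\<gamma> + d) = \<beta> - \<gamma> - d"
        by (simp_all add: algebra_simps)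
      from step show ?thesis
      proof
        assume "\<beta> - d \<in> P"
        with Suc.IH[of "\<beta> - d" \<gamma>, unfolded swap] Suc.prems(2) nonneg ht_less
        have "(\<gamma>, \<beta> - d) \<in> covers\<^sup>*" by blast
        with \<open>\<beta> - d \<in> P\<close> Suc.prems(1) d show ?thesis by (auto intro: rtrancl_into_rtrancl)
      next
        assume "\<gamma> + d \<in> P"
        with Suc.IH[of \<beta> "\<gamma> + d", unfolded shift] Suc.prems(1) nonneg ht_less
        have "(\<gamma> + d, \<beta>) \<in> covers\<^sup>*" by blast
        with \<open>\<gamma> + d \<in> P\<close> Suc.prems(2) d show ?thesis by (auto intro: converse_rtrancl_into_rtrancl)
      qed
    qed simp
  qed
  obtain n :: nat where "ht (\<beta> - \<gamma>) < of_nat n"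
    using reals_Archimedean2 by blast
  then show ?thesis
    unfolding root_le_def by (rule chain[OF assms])
qed

lemma antichain_inner_nonpos:
  assumes "antichain \<Phi> \<Delta> \<Psi>" "\<beta> \<in> \<Psi>" "\<gamma> \<in> \<Psi>" "\<beta> \<noteq> \<gamma>"
  shows "\<beta> \<bullet> \<gamma> \<le> 0"
proof (rule ccontr)
  assume "\<not> \<beta> \<bullet> \<gamma> \<le> 0"
  have "\<beta> \<in> P" "\<gamma> \<in> P"
    using assms unfolding antichain_def by auto
  then have "\<beta> - \<gamma> \<in> \<Phi>"
    using \<open>\<not> \<beta> \<bullet> \<gamma> \<le> 0\<close> assms(4) pos_roots_subset by (intro diff_root_if_inner_pos) auto
  then have "\<beta> - \<gamma> \<in> P \<or> \<gamma> - \<beta> \<in> P"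
    using root_pos_or_neg[of "\<beta> - \<gamma>"] by simp
  then have "root_le \<Phi> \<Delta> \<gamma> \<beta> \<or> root_le \<Phi> \<Delta> \<beta> \<gamma>"
    using root_le_if_coord_diff_nonneg \<open>\<beta> \<in> P\<close> \<open>\<gamma> \<in> P\<close> pos_roots_iff by blast
  moreover have "\<not> root_le \<Phi> \<Delta> \<gamma> \<beta>" "\<not> root_le \<Phi> \<Delta> \<beta> \<gamma>"
    using assms unfolding antichain_def by auto
  ultimately show False by blast
qed

lemma antichain_obtuse_family:
  assumes "antichain \<Phi> \<Delta> \<Psi>"
  shows "obtuse_family \<Psi> ht"
proof (rule obtuse_family.intro)
  have "\<Psi> \<subseteq> P" using assms by (simp add: antichain_def)
  then have "\<Psi> \<subseteq> \<Phi>" using pos_roots_subset by blast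
  show "finite \<Psi>" using \<open>\<Psi> \<subseteq> \<Phi>\<close> finite_roots by (rule finite_subset)
  show "linear ht" by (rule linear_ht)
  show "0 < ht \<beta>" if "\<beta> \<in> \<Psi>" for \<beta>
    using that \<open>\<Psi> \<subseteq> P\<close> pos_root_ht_pos by blast
  show "\<beta> \<bullet> \<gamma> \<le> 0" if "\<beta> \<in> \<Psi>" "\<gamma> \<in> \<Psi>" "\<beta> \<noteq> \<gamma>" for \<beta> \<gamma>
    using assms that by (rule antichain_inner_nonpos)
  show "sgn \<beta> \<bullet> sgn \<gamma> \<le> - 1 / 2" if "\<beta> \<in> \<Psi>" "\<gamma> \<in> \<Psi>" "\<beta> \<bullet> \<gamma> < 0" for \<beta> \<gamma>
    using that \<open>\<Psi> \<subseteq> \<Phi>\<close> sgn_inner_sgn_le_if_obtuse by blast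
qed

section \<open>The Weyl group\<close>

lemma weyl_group_linear: "w \<in> weyl_group \<Phi> \<Longrightarrow> linear w"
proof (induction rule: weyl_group.induct)
  case weyl_id
  show ?case by (rule linear_id)
next
  case (weyl_step w \<alpha>)
  show ?case by (rule linear_compose[OF weyl_step.IH linear_refl])
qed

lemma weyl_group_image_roots: "w \<in> weyl_group \<Phi> \<Longrightarrow> w ` \<Phi> = \<Phi>"
proof (induction rule: weyl_group.induct)
  case weyl_id
  show ?case by simp
next
  case (weyl_step w \<alpha>)
  have "(refl \<alpha> \<circ> w) ` \<Phi> = refl \<alpha> ` w ` \<Phi>" by (rule image_comp[symmetric])
  with weyl_step show ?case by (simp add: refl_image_roots)
qed

lemma weyl_group_comp_refl: "w \<in> weyl_group \<Phi> \<Longrightarrow> \<alpha> \<in> \<Phi> \<Longrightarrow> w \<circ> refl \<alpha> \<in> weyl_group \<Phi>"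
proof (induction rule: weyl_group.induct)
  case weyl_id
  show ?case using weyl_group.weyl_step[OF weyl_group.weyl_id weyl_id] by simp
next
  case (weyl_step w \<beta>)
  show ?case
    using weyl_group.weyl_step[OF weyl_step.IH[OF weyl_step.prems] weyl_step.hyps(2)]
    by (simp only: comp_assoc)
qed

lemma finite_weyl_group: "finite (weyl_group \<Phi>)"
proof -
  let ?L = "{w. linear w \<and> w ` \<Phi> \<subseteq> \<Phi>}"
  have inj: "inj_on (\<lambda>w. restrict w \<Phi>) ?L"
  proof (rule inj_onI)
    fix u v assume "u \<in> ?L" "v \<in> ?L" and restrict: "restrict u \<Phi> = restrict v \<Phi>"
    have on_roots: "u \<alpha> = v \<alpha>" if "\<alpha> \<in> \<Phi>" for \<alpha>
      using fun_cong[OF restrict, of \<alpha>] that by simp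
    have "u x = v x" for x
      by (rule linear_eq_on_span[of u v \<Phi>]) (use \<open>u \<in> ?L\<close> \<open>v \<in> ?L\<close> on_roots span_roots in auto)
    then show "u = v" by (rule ext)
  qed
  have "(\<lambda>w. restrict w \<Phi>) ` ?L \<subseteq> Pi\<^sub>E \<Phi> (\<lambda>_. \<Phi>)" by auto
  then have "finite ((\<lambda>w. restrict w \<Phi>) ` ?L)"
    by (rule finite_subset) (simp add: finite_PiE finite_roots)
  then have "finite ?L" using inj by (rule finite_imageD)
  moreover have "weyl_group \<Phi> \<subseteq> ?L"
    using weyl_group_linear weyl_group_image_roots by auto
  ultimately show ?thesis by (rule rev_finite_subset)
qed

lemma bij_betw_comp_refl: "\<alpha> \<in> \<Phi> \<Longrightarrow> bij_betw (\<lambda>w. w \<circ> refl \<alpha>) (weyl_group \<Phi>) (weyl_group \<Phi>)"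
  by (rule bij_betwI[where g = "\<lambda>w. w \<circ> refl \<alpha>"])
    (simp_all add: weyl_group_comp_refl comp_assoc refl_comp_refl)

lemma Xvar_eq: "Xvar \<Phi> \<Delta> \<beta> w = (if - w \<beta> \<in> P then 1 else 0)"
  using inj_image_mem_iff[OF inj_uminus, of "- w \<beta>" P] by (simp add: Xvar_def)

lemma Xvar_comp_refl_self:
  assumes "\<beta> \<in> \<Phi>" "w \<in> weyl_group \<Phi>"
  shows "Xvar \<Phi> \<Delta> \<beta> (w \<circ> refl \<beta>) = 1 - Xvar \<Phi> \<Delta> \<beta> w"
proof -
  have "(w \<circ> refl \<beta>) \<beta> = - w \<beta>"
    using weyl_group_linear[OF assms(2)] by (simp add: refl_self linear_neg)
  moreover have "w \<beta> \<in> \<Phi>"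
    using weyl_group_image_roots assms by blast
  ultimately show ?thesis
    using root_pos_or_neg[of "w \<beta>"] uminus_pos_root_notin[of "w \<beta>"] uminus_pos_root_notin[of "- w \<beta>"]
    by (auto simp: Xvar_eq)
qed

lemma Xvar_comp_refl_orthogonal: "\<gamma> \<bullet> \<beta> = 0 \<Longrightarrow> Xvar \<Phi> \<Delta> \<gamma> (w \<circ> refl \<beta>) = Xvar \<Phi> \<Delta> \<gamma> w"
  by (simp add: Xvar_def refl_orthogonal)

lemma indep_var_Xvar_if_orthogonal:
  assumes "\<beta> \<in> \<Phi>" "\<gamma> \<in> \<Phi>" "\<beta> \<bullet> \<gamma> = 0"
  shows "prob_space.indep_var (measure_pmf (pmf_of_set (weyl_group \<Phi>)))
    borel (Xvar \<Phi> \<Delta> \<beta>) borel (Xvar \<Phi> \<Delta> \<gamma>)"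
proof (rule indep_var_pmf_of_set_toggled_bits)
  show "finite (weyl_group \<Phi>)" "weyl_group \<Phi> \<noteq> {}"
    using finite_weyl_group weyl_group.weyl_id by auto
  show "bij_betw (\<lambda>w. w \<circ> refl \<beta>) (weyl_group \<Phi>) (weyl_group \<Phi>)"
    "bij_betw (\<lambda>w. w \<circ> refl \<gamma>) (weyl_group \<Phi>) (weyl_group \<Phi>)"
    using assms(1,2) by (auto intro: bij_betw_comp_refl)
  fix w assume w: "w \<in> weyl_group \<Phi>"
  show "Xvar \<Phi> \<Delta> \<beta> w \<in> {0, 1}" "Xvar \<Phi> \<Delta> \<gamma> w \<in> {0, 1}"
    by (simp_all add: Xvar_def)
  show "Xvar \<Phi> \<Delta> \<beta> (w \<circ> refl \<beta>) = 1 - Xvar \<Phi> \<Delta> \<beta> w"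
    using assms(1) w by (rule Xvar_comp_refl_self)
  show "Xvar \<Phi> \<Delta> \<gamma> (w \<circ> refl \<beta>) = Xvar \<Phi> \<Delta> \<gamma> w"
    using assms(3) by (simp add: Xvar_comp_refl_orthogonal inner_commute)
  show "Xvar \<Phi> \<Delta> \<gamma> (w \<circ> refl \<gamma>) = 1 - Xvar \<Phi> \<Delta> \<gamma> w"
    using assms(2) w by (rule Xvar_comp_refl_self)
qed

lemma dependent_pair_nonorthogonal:
  "\<beta> \<in> \<Phi> \<Longrightarrow> \<gamma> \<in> \<Phi> \<Longrightarrow> dependent_pair \<Phi> \<Delta> \<beta> \<gamma> \<Longrightarrow> \<beta> \<bullet> \<gamma> \<noteq> 0"
  using indep_var_Xvar_if_orthogonal by (auto simp: dependent_pair_def)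

end

theorem lemma4p3:
  fixes \<Phi> \<Delta> \<Psi> :: "'a::euclidean_space set"
  assumes "root_system \<Phi>" and "simple_system \<Phi> \<Delta>" and "antichain \<Phi> \<Delta> \<Psi>"
  shows "(\<forall>\<beta>\<in>\<Psi>. \<forall>\<gamma>\<in>\<Psi>. \<beta> \<noteq> \<gamma> \<longrightarrow> \<beta> \<bullet> \<gamma> \<le> 0)
    \<and> card {{\<beta>, \<gamma>} | \<beta> \<gamma>. \<beta> \<in> \<Psi> \<and> \<gamma> \<in> \<Psi> \<and> \<beta> \<noteq> \<gamma> \<and> dependent_pair \<Phi> \<Delta> \<beta> \<gamma>}
        \<le> card \<Psi> - 1
    \<and> (\<forall>\<beta>\<in>\<Psi>. card {\<gamma>\<in>\<Psi>. \<gamma> \<noteq> \<beta> \<and> dependent_pair \<Phi> \<Delta> \<beta> \<gamma>} \<le> 3)"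
proof -
  interpret based_root_system \<Phi> \<Delta>
    using assms(1,2) by (rule based_root_system.intro)
  interpret obtuse_family \<Psi> ht
    using assms(3) by (rule antichain_obtuse_family)
  have "\<Psi> \<subseteq> \<Phi>"
    using assms(3) pos_roots_subset by (auto simp: antichain_def)
  then have "\<beta> \<bullet> \<gamma> \<noteq> 0" if "\<beta> \<in> \<Psi>" "\<gamma> \<in> \<Psi>" "dependent_pair \<Phi> \<Delta> \<beta> \<gamma>" for \<beta> \<gamma>
    using that dependent_pair_nonorthogonal by blast
  then show ?thesis
    using inner_nonpos card_edges_le_if_nonorthogonal card_neighbours_le_3_if_nonorthogonal by blast
qed

end
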